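(* Let $\mathbf A$ be the Płonka sum of a semilattice directed system of metamorphisms $\{\xi_{pq}:\mathbf A_p\Rightarrow\mathbf A_q: p\preceq q\text{ in }\mathbf I\}$ between algebras of a finite type $\tau$ (with $\mathbf I$ having a least element if $\tau$ contains constants). Then $\mathbf A$ is locally finite if and only if every $\mathbf A_p$ ($p\in I$) is locally finite.
   Context: An algebra is locally finite if every finitely generated subalgebra is finite. A metamorphism $f:\mathbf A\Rightarrow\mathbf B$ between algebras of type $\tau$ assigns to each $n$-ary symbol $\sigma$ maps $f^{\sigma0},\dots,f^{\sigma n}:A\to B$ with $f^{\sigma0}(\sigma^{\mathbf A}(a_1,\dots,a_n))=\sigma^{\mathbf B}(f^{\sigma1}(a_1),\dots,f^{\sigma n}(a_n))$ (for constants $f^{\omega0}(\omega^{\mathbf A})=\omega^{\mathbf B}$); composition and identity are componentwise. A semilattice directed system of metamorphisms over a join-semilattice $\mathbf I=\langle I,\vee\rangle$ (order $\preceq$) is a family of pairwise disjoint algebras $\mathbf A_p$ of type $\tau$ with metamorphisms $\xi_{pq}:\mathbf A_p\Rightarrow\mathbf A_q$ for $p\preceq q$, $\xi_{pp}$ the identity, $\xi_{qr}\circ\xi_{pq}=\xi_{pr}$. Its Płonka sum is the algebra on $\biguplus_pA_p$ with $\sigma(a_1,\dots,a_n):=\sigma^{\mathbf A_q}(\xi^{\sigma1}_{p_1q}(a_1),\dots,\xi^{\sigma n}_{p_nq}(a_n))$ for $a_i\in A_{p_i}$, $q=p_1\vee\dots\vee p_n$, and $\omega:=\omega^{\mathbf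 A_\bot}$ for each constant $\omega$, where $\bot$ is the least element of $\mathbf I$. *)

theory Defs
  imports Main
begin

text \<open>A type \<tau> is given by a set S of operation symbols with arity function ar.\<close>

definition is_algebra :: "'s set \<Rightarrow> ('s \<Rightarrow> nat) \<Rightarrow> 'a set \<Rightarrow> ('s \<Rightarrow> 'a list \<Rightarrow> 'a) \<Rightarrow> bool" where
  "is_algebra S ar C f \<longleftrightarrow>
     (\<forall>\<sigma>\<in>S. \<forall>xs. length xs = ar \<sigma> \<and> set xs \<subseteq> C \<longrightarrow> f \<sigma> xs \<in> C)"

inductive_set generated :: "'s set \<Rightarrow> ('s \<Rightarrow> nat) \<Rightarrow> ('s \<Rightarrow> 'a list \<Rightarrow> 'a) \<Rightarrow> 'a set \<Rightarrow> 'a set"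
  for S ar f X where
  gen_base: "x \<in> X \<Longrightarrow> x \<in> generated S ar f X"
| gen_op: "\<sigma> \<in> S \<Longrightarrow> length xs = ar \<sigma> \<Longrightarrow> \<forall>x\<in>set xs. x \<in> generated S ar f X
            \<Longrightarrow> f \<sigma> xs \<in> generated S ar f X"

definition locally_finite :: "'s set \<Rightarrow> ('s \<Rightarrow> nat) \<Rightarrow> 'a set \<Rightarrow> ('s \<Rightarrow> 'a list \<Rightarrow> 'a) \<Rightarrow> bool" where
  "locally_finite S ar C f \<longleftrightarrow>
     (\<forall>X. finite X \<and> X \<subseteq> C \<longrightarrow> finite (generated S ar f X))"

text \<open>A metamorphism m : (CA,fA) \<Rightarrow> (CB,fB); its components are m \<sigma> j for j = 0..ar \<sigma>.\<close>
definition metamorphism ::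
  "'s set \<Rightarrow> ('s \<Rightarrow> nat) \<Rightarrow> 'a set \<Rightarrow> ('s \<Rightarrow> 'a list \<Rightarrow> 'a) \<Rightarrow> 'b set \<Rightarrow> ('s \<Rightarrow> 'b list \<Rightarrow> 'b)
    \<Rightarrow> ('s \<Rightarrow> nat \<Rightarrow> 'a \<Rightarrow> 'b) \<Rightarrow> bool" where
  "metamorphism S ar CA fA CB fB m \<longleftrightarrow>
     (\<forall>\<sigma>\<in>S. (\<forall>j\<le>ar \<sigma>. \<forall>a\<in>CA. m \<sigma> j a \<in> CB) \<and>
        (\<forall>xs. length xs = ar \<sigma> \<and> set xs \<subseteq> CA \<longrightarrow>
           m \<sigma> 0 (fA \<sigma> xs) = fB \<sigma> (map (\<lambda>(j, x). m \<sigma> j x) (zip [1..<Suc (ar \<sigma>)] xs))))"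

definition join_semilattice :: "'i set \<Rightarrow> ('i \<Rightarrow> 'i \<Rightarrow> 'i) \<Rightarrow> bool" where
  "join_semilattice I join \<longleftrightarrow>
     (\<forall>p\<in>I. \<forall>q\<in>I. join p q \<in> I) \<and>
     (\<forall>p\<in>I. join p p = p) \<and>
     (\<forall>p\<in>I. \<forall>q\<in>I. join p q = join q p) \<and>
     (\<forall>p\<in>I. \<forall>q\<in>I. \<forall>r\<in>I. join (join p q) r = join p (join q r))"

definition sl_le :: "('i \<Rightarrow> 'i \<Rightarrow> 'i) \<Rightarrow> 'i \<Rightarrow> 'i \<Rightarrow> bool" where
  "sl_le join p q \<longleftrightarrow> join p q = q"

definition sl_directed_system ::
  "'s set \<Rightarrow> ('s \<Rightarrow> nat) \<Rightarrow> 'i set \<Rightarrow> ('i \<Rightarrow> 'i \<Rightarrow> 'i) \<Rightarrow> 'i \<Rightarrow> ('i \<Rightarrow> 'a set)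
    \<Rightarrow> ('i \<Rightarrow> 's \<Rightarrow> 'a list \<Rightarrow> 'a) \<Rightarrow> ('i \<Rightarrow> 'i \<Rightarrow> 's \<Rightarrow> nat \<Rightarrow> 'a \<Rightarrow> 'a) \<Rightarrow> bool" where
  "sl_directed_system S ar I join bt A F \<xi> \<longleftrightarrow>
     join_semilattice I join \<and>
     ((\<exists>\<sigma>\<in>S. ar \<sigma> = 0) \<longrightarrow> bt \<in> I \<and> (\<forall>p\<in>I. sl_le join bt p)) \<and>
     (\<forall>p\<in>I. \<forall>q\<in>I. p \<noteq> q \<longrightarrow> A p \<inter> A q = {}) \<and>
     (\<forall>p\<in>I. is_algebra S ar (A p) (F p)) \<and>
     (\<forall>p\<in>I. \<forall>q\<in>I. sl_le join p q \<longrightarrow> metamorphism S ar (A p) (F p) (A q) (F q) (\<xi> p q)) \<and>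
     (\<forall>p\<in>I. \<forall>\<sigma>\<in>S. \<forall>j\<le>ar \<sigma>. \<forall>a\<in>A p. \<xi> p p \<sigma> j a = a) \<and>
     (\<forall>p\<in>I. \<forall>q\<in>I. \<forall>r\<in>I. sl_le join p q \<and> sl_le join q r \<longrightarrow>
        (\<forall>\<sigma>\<in>S. \<forall>j\<le>ar \<sigma>. \<forall>a\<in>A p. \<xi> q r \<sigma> j (\<xi> p q \<sigma> j a) = \<xi> p r \<sigma> j a))"

definition pl_idx :: "'i set \<Rightarrow> ('i \<Rightarrow> 'a set) \<Rightarrow> 'a \<Rightarrow> 'i" where
  "pl_idx I A a = (THE p. p \<in> I \<and> a \<in> A p)"

definition pl_join_idx :: "'i set \<Rightarrow> ('i \<Rightarrow> 'i \<Rightarrow> 'i) \<Rightarrow> 'i \<Rightarrow> ('i \<Rightarrow> 'a set) \<Rightarrow> 'a list \<Rightarrow> 'i" where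
  "pl_join_idx I join bt A xs =
     (if xs = [] then bt
      else fold join (map (pl_idx I A) (tl xs)) (pl_idx I A (hd xs)))"

definition plonka_carrier :: "'i set \<Rightarrow> ('i \<Rightarrow> 'a set) \<Rightarrow> 'a set" where
  "plonka_carrier I A = (\<Union>p\<in>I. A p)"

definition plonka_ops ::
  "'i set \<Rightarrow> ('i \<Rightarrow> 'i \<Rightarrow> 'i) \<Rightarrow> 'i \<Rightarrow> ('i \<Rightarrow> 'a set) \<Rightarrow> ('i \<Rightarrow> 's \<Rightarrow> 'a list \<Rightarrow> 'a)
    \<Rightarrow> ('i \<Rightarrow> 'i \<Rightarrow> 's \<Rightarrow> nat \<Rightarrow> 'a \<Rightarrow> 'a) \<Rightarrow> 's \<Rightarrow> 'a list \<Rightarrow> 'a" where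
  "plonka_ops I join bt A F \<xi> \<sigma> xs =
     (let q = pl_join_idx I join bt A xs in
      F q \<sigma> (map (\<lambda>(j, x). \<xi> (pl_idx I A x) q \<sigma> j x) (zip [1..<Suc (length xs)] xs)))"

end

(*
  If the Plonka sum is locally finite, so is every A_p: on nonempty argument lists from A_p the
  sum computes with F p itself (xi_pp is the identity), so the subalgebra of A_p generated by X
  lies in the subalgebra of the sum generated by X and the finitely many constants of A_p.

  Conversely, let T be the subalgebra of the sum generated by a finite X. Each element of T lies
  in a summand whose index is a join of indices of elements of X (or the bottom element, for
  constants), so T meets only finitely many summands. By induction along the order of these
  indices, T \<inter> A_q is finite: it lies in the subalgebra of A_q generated by X \<inter> A_q and by
  the images under the maps xi_pq of the finite sets T \<inter> A_p with p strictly below q, a finite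
  set because the type is finite.
*)
theory Submission
  imports Defs
begin

lemma generated_subset_carrier:
  assumes "is_algebra S ar C f" and "X \<subseteq> C"
  shows "generated S ar f X \<subseteq> C"
proof
  fix t assume "t \<in> generated S ar f X"
  then show "t \<in> C"
  proof induction
    case (gen_base x)
    with assms(2) show ?case by blast
  next
    case (gen_op \<sigma> xs)
    then have "set xs \<subseteq> C" by blast
    with gen_op.hyps(1,2) assms(1) show ?case unfolding is_algebra_def by blast
  qed
qed

definition sl_upper_bound :: "'i set \<Rightarrow> ('i \<Rightarrow> 'i \<Rightarrow> 'i) \<Rightarrow> 'i set \<Rightarrow> 'i \<Rightarrow> bool" where
  "sl_upper_bound I join P v \<longleftrightarrow> v \<in> I \<and> (\<forall>p\<in>P. sl_le join p v)"

definition sl_lub :: "'i set \<Rightarrow> ('i \<Rightarrow> 'i \<Rightarrow> 'i) \<Rightarrow> 'i set \<Rightarrow> 'i \<Rightarrow> bool" where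
  "sl_lub I join P v \<longleftrightarrow>
     sl_upper_bound I join P v \<and> (\<forall>w. sl_upper_bound I join P w \<longrightarrow> sl_le join v w)"

definition sl_join_closure :: "'i set \<Rightarrow> ('i \<Rightarrow> 'i \<Rightarrow> 'i) \<Rightarrow> 'i set \<Rightarrow> 'i set" where
  "sl_join_closure I join P0 = {v. \<exists>P\<subseteq>P0. P \<noteq> {} \<and> sl_lub I join P v}"

locale join_semilattice_on =
  fixes I :: "'i set" and join :: "'i \<Rightarrow> 'i \<Rightarrow> 'i"
  assumes is_join_semilattice: "join_semilattice I join"
begin

lemma join_closed: "p \<in> I \<Longrightarrow> q \<in> I \<Longrightarrow> join p q \<in> I"
  and join_idem: "p \<in> I \<Longrightarrow> join p p = p"
  and join_commute: "p \<in> I \<Longrightarrow> q \<in> I \<Longrightarrow> join p q = join q p"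
  and join_assoc: "p \<in> I \<Longrightarrow> q \<in> I \<Longrightarrow> r \<in> I \<Longrightarrow> join (join p q) r = join p (join q r)"
  using is_join_semilattice unfolding join_semilattice_def by blast+

lemma sl_le_refl: "p \<in> I \<Longrightarrow> sl_le join p p"
  by (simp add: sl_le_def join_idem)

lemma sl_le_antisym: "p \<in> I \<Longrightarrow> q \<in> I \<Longrightarrow> sl_le join p q \<Longrightarrow> sl_le join q p \<Longrightarrow> p = q"
  unfolding sl_le_def by (metis join_commute)

lemma sl_le_trans:
  "p \<in> I \<Longrightarrow> q \<in> I \<Longrightarrow> r \<in> I \<Longrightarrow> sl_le join p q \<Longrightarrow> sl_le join q r \<Longrightarrow> sl_le join p r"
  unfolding sl_le_def by (metis join_assoc)

lemma sl_le_join1: "p \<in> I \<Longrightarrow> q \<in> I \<Longrightarrow> sl_le join p (join p q)"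
  unfolding sl_le_def by (metis join_assoc join_idem)

lemma sl_le_join2: "p \<in> I \<Longrightarrow> q \<in> I \<Longrightarrow> sl_le join q (join p q)"
  using sl_le_join1 join_commute by metis

lemma sl_join_le:
  "p \<in> I \<Longrightarrow> q \<in> I \<Longrightarrow> r \<in> I \<Longrightarrow> sl_le join p r \<Longrightarrow> sl_le join q r \<Longrightarrow> sl_le join (join p q) r"
  unfolding sl_le_def by (metis join_assoc)

lemma sl_lub_unique: "sl_lub I join P v \<Longrightarrow> sl_lub I join P w \<Longrightarrow> v = w"
  unfolding sl_lub_def sl_upper_bound_def using sl_le_antisym by blast

lemma sl_lub_singleton: "p \<in> I \<Longrightarrow> sl_lub I join {p} p"
  unfolding sl_lub_def sl_upper_bound_def using sl_le_refl by auto

lemma sl_lub_cong: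
  "(\<And>w. sl_upper_bound I join P w \<longleftrightarrow> sl_upper_bound I join Q w) \<Longrightarrow> sl_lub I join P v = sl_lub I join Q v"
  unfolding sl_lub_def by auto

lemma sl_lub_fold:
  "a \<in> I \<Longrightarrow> set ys \<subseteq> I \<Longrightarrow> sl_lub I join (insert a (set ys)) (fold join ys a)"
proof (induction ys arbitrary: a)
  case Nil
  then show ?case using sl_lub_singleton by simp
next
  case (Cons y ys)
  then have "y \<in> I" and ya: "join y a \<in> I" by (auto intro: join_closed)
  have "sl_le join (join y a) w \<longleftrightarrow> sl_le join y w \<and> sl_le join a w" if "w \<in> I" for w
  proof
    assume "sl_le join (join y a) w"
    then show "sl_le join y w \<and> sl_le join a w"
      using sl_le_trans[OF _ ya that] sl_le_join1[OF \<open>y \<in> I\<close> \<open>a \<in> I\<close>]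
        sl_le_join2[OF \<open>y \<in> I\<close> \<open>a \<in> I\<close>] \<open>y \<in> I\<close> \<open>a \<in> I\<close> by blast
  qed (use sl_join_le \<open>y \<in> I\<close> \<open>a \<in> I\<close> that in blast)
  then have "sl_upper_bound I join (insert (join y a) (set ys)) w \<longleftrightarrow>
      sl_upper_bound I join (insert a (set (y # ys))) w" for w
    unfolding sl_upper_bound_def by auto
  moreover have "sl_lub I join (insert (join y a) (set ys)) (fold join ys (join y a))"
    using Cons ya by simp
  ultimately show ?case
    using sl_lub_cong[of "insert (join y a) (set ys)" "insert a (set (y # ys))"] by simp
qed

lemma sl_lub_UN:
  assumes "sl_lub I join V q"
    and "\<And>v. v \<in> V \<Longrightarrow> sl_lub I join (P v) v" and "\<And>v. v \<in> V \<Longrightarrow> P v \<subseteq> I"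
  shows "sl_lub I join (\<Union>v\<in>V. P v) q"
proof -
  have "sl_upper_bound I join (\<Union>v\<in>V. P v) w \<longleftrightarrow> sl_upper_bound I join V w" for w
  proof
    assume w: "sl_upper_bound I join (\<Union>v\<in>V. P v) w"
    have "sl_le join v w" if "v \<in> V" for v
    proof -
      have "sl_upper_bound I join (P v) w"
        using w that unfolding sl_upper_bound_def by blast
      with assms(2)[OF that] show ?thesis unfolding sl_lub_def by blast
    qed
    with w show "sl_upper_bound I join V w" unfolding sl_upper_bound_def by blast
  next
    assume w: "sl_upper_bound I join V w"
    have "sl_le join p w" if "v \<in> V" "p \<in> P v" for v p
    proof -
      have "p \<in> I" using assms(3) that by blast
      moreover have "v \<in> I" "sl_le join p v"
        using assms(2)[OF that(1)] that(2) unfolding sl_lub_def sl_upper_bound_def by blast+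
      moreover have "w \<in> I" "sl_le join v w" using w that(1) unfolding sl_upper_bound_def by blast+
      ultimately show ?thesis using sl_le_trans by blast
    qed
    with w show "sl_upper_bound I join (\<Union>v\<in>V. P v) w" unfolding sl_upper_bound_def by blast
  qed
  from sl_lub_cong[OF this] assms(1) show ?thesis by simp
qed

lemma finite_sl_join_closure:
  assumes "finite P0"
  shows "finite (sl_join_closure I join P0)"
proof (rule finite_subset)
  show "sl_join_closure I join P0 \<subseteq> (\<lambda>P. THE v. sl_lub I join P v) ` Pow P0"
  proof
    fix v assume "v \<in> sl_join_closure I join P0"
    then obtain P where "P \<subseteq> P0" "sl_lub I join P v" unfolding sl_join_closure_def by blast
    then have "v = (THE v. sl_lub I join P v)" using sl_lub_unique by (blast intro: the_equality[symmetric])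
    with \<open>P \<subseteq> P0\<close> show "v \<in> (\<lambda>P. THE v. sl_lub I join P v) ` Pow P0" by blast
  qed
  show "finite ((\<lambda>P. THE v. sl_lub I join P v) ` Pow P0)"
    using assms by simp
qed

lemma subset_sl_join_closure: "P0 \<subseteq> I \<Longrightarrow> P0 \<subseteq> sl_join_closure I join P0"
  unfolding sl_join_closure_def using sl_lub_singleton by blast

lemma sl_lub_in_sl_join_closure:
  assumes "P0 \<subseteq> I" and "V \<subseteq> sl_join_closure I join P0" and "V \<noteq> {}" and "sl_lub I join V q"
  shows "q \<in> sl_join_closure I join P0"
proof -
  have "\<forall>v\<in>V. \<exists>P. P \<subseteq> P0 \<and> P \<noteq> {} \<and> sl_lub I join P v"
    using assms(2) unfolding sl_join_closure_def by blast
  then obtain P where P: "\<And>v. v \<in> V \<Longrightarrow> P v \<subseteq> P0 \<and> P v \<noteq> {} \<and> sl_lub I join (P v) v"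
    by metis
  have "sl_lub I join (\<Union>v\<in>V. P v) q"
    by (rule sl_lub_UN[OF assms(4)]) (use P assms(1) in blast)+
  moreover have "(\<Union>v\<in>V. P v) \<subseteq> P0" and "(\<Union>v\<in>V. P v) \<noteq> {}"
    using P assms(3) by auto
  ultimately show ?thesis unfolding sl_join_closure_def by blast
qed

lemma finite_strict_below_induct:
  assumes "finite K" and "K \<subseteq> I" and "q \<in> I"
    and step: "\<And>q. q \<in> I \<Longrightarrow> (\<And>p. p \<in> K \<Longrightarrow> sl_le join p q \<Longrightarrow> p \<noteq> q \<Longrightarrow> P p) \<Longrightarrow> P q"
  shows "P q"
  using assms(3)
proof (induction "card {p\<in>K. sl_le join p q \<and> p \<noteq> q}" arbitrary: q rule: less_induct)
  case less
  show ?case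
  proof (rule step[OF less.prems])
    fix p assume p: "p \<in> K" "sl_le join p q" "p \<noteq> q"
    with assms(2) less.prems have "p \<in> I" by blast
    have "{r\<in>K. sl_le join r p \<and> r \<noteq> p} \<subset> {r\<in>K. sl_le join r q \<and> r \<noteq> q}"
    proof
      show "{r\<in>K. sl_le join r p \<and> r \<noteq> p} \<subseteq> {r\<in>K. sl_le join r q \<and> r \<noteq> q}"
      proof clarify
        fix r assume r: "r \<in> K" "sl_le join r p" "r \<noteq> p"
        with assms(2) have "r \<in> I" by blast
        with r p \<open>p \<in> I\<close> less.prems show "sl_le join r q \<and> r \<noteq> q"
          by (metis sl_le_trans sl_le_antisym)
      qed
      show "{r\<in>K. sl_le join r p \<and> r \<noteq> p} \<noteq> {r\<in>K. sl_le join r q \<and> r \<noteq> q}"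
        using p by blast
    qed
    then have "card {r\<in>K. sl_le join r p \<and> r \<noteq> p} < card {r\<in>K. sl_le join r q \<and> r \<noteq> q}"
      using assms(1) by (simp add: psubset_card_mono)
    then show "P p" using less.hyps \<open>p \<in> I\<close> by blast
  qed
qed

end

lemma zip_upt_memD:
  "(j, x) \<in> set (zip [1..<Suc (length xs)] xs) \<Longrightarrow> x \<in> set xs \<and> j \<le> length xs"
  by (auto dest: set_zip_leftD set_zip_rightD simp del: upt_Suc)

locale plonka_system = join_semilattice_on I join
  for S :: "'s set" and ar :: "'s \<Rightarrow> nat"
    and I :: "'i set" and join :: "'i \<Rightarrow> 'i \<Rightarrow> 'i" and bt :: 'i
    and A :: "'i \<Rightarrow> 'a set" and F :: "'i \<Rightarrow> 's \<Rightarrow> 'a list \<Rightarrow> 'a"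
    and \<xi> :: "'i \<Rightarrow> 'i \<Rightarrow> 's \<Rightarrow> nat \<Rightarrow> 'a \<Rightarrow> 'a" +
  assumes bt_in_I: "\<sigma> \<in> S \<Longrightarrow> ar \<sigma> = 0 \<Longrightarrow> bt \<in> I"
    and summands_disjoint: "p \<in> I \<Longrightarrow> q \<in> I \<Longrightarrow> p \<noteq> q \<Longrightarrow> A p \<inter> A q = {}"
    and summand_is_algebra: "p \<in> I \<Longrightarrow> is_algebra S ar (A p) (F p)"
    and xi_metamorphism:
      "p \<in> I \<Longrightarrow> q \<in> I \<Longrightarrow> sl_le join p q \<Longrightarrow> metamorphism S ar (A p) (F p) (A q) (F q) (\<xi> p q)"
    and xi_refl: "p \<in> I \<Longrightarrow> \<sigma> \<in> S \<Longrightarrow> j \<le> ar \<sigma> \<Longrightarrow> a \<in> A p \<Longrightarrow> \<xi> p p \<sigma> j a = a"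

lemma sl_directed_system_imp_plonka_system:
  assumes "sl_directed_system S ar I join bt A F \<xi>"
  shows "plonka_system S ar I join bt A F \<xi>"
  using assms unfolding sl_directed_system_def by unfold_locales auto

context plonka_system
begin

abbreviation idx :: "'a \<Rightarrow> 'i" where "idx \<equiv> pl_idx I A"
abbreviation join_idx :: "'a list \<Rightarrow> 'i" where "join_idx \<equiv> pl_join_idx I join bt A"
abbreviation Pl :: "'s \<Rightarrow> 'a list \<Rightarrow> 'a" where "Pl \<equiv> plonka_ops I join bt A F \<xi>"
abbreviation carrier :: "'a set" where "carrier \<equiv> plonka_carrier I A"

lemma summand_closed:
  "p \<in> I \<Longrightarrow> \<sigma> \<in> S \<Longrightarrow> length xs = ar \<sigma> \<Longrightarrow> set xs \<subseteq> A p \<Longrightarrow> F p \<sigma> xs \<in> A p"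
  using summand_is_algebra unfolding is_algebra_def by blast

lemma xi_in_summand:
  assumes "p \<in> I" "q \<in> I" "sl_le join p q" "\<sigma> \<in> S" "j \<le> ar \<sigma>" "a \<in> A p"
  shows "\<xi> p q \<sigma> j a \<in> A q"
  using xi_metamorphism[OF assms(1-3)] assms(4-6) unfolding metamorphism_def by blast

lemma pl_idx_eq: "p \<in> I \<Longrightarrow> x \<in> A p \<Longrightarrow> idx x = p"
  unfolding pl_idx_def using summands_disjoint by (intro the_equality) blast+

lemma pl_idx_in_carrier: "x \<in> carrier \<Longrightarrow> idx x \<in> I \<and> x \<in> A (idx x)"
  unfolding plonka_carrier_def using pl_idx_eq by blast

lemma pl_join_idx_lub:
  assumes "xs \<noteq> []" and "set xs \<subseteq> carrier"
  shows "sl_lub I join (idx ` set xs) (join_idx xs)"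
proof -
  obtain x ys where xs: "xs = x # ys" using assms(1) by (cases xs) auto
  then have "idx x \<in> I" "set (map idx ys) \<subseteq> I" using assms(2) pl_idx_in_carrier by auto
  from sl_lub_fold[OF this] show ?thesis
    unfolding xs pl_join_idx_def by simp
qed

lemma plonka_ops_eq:
  "Pl \<sigma> xs = F (join_idx xs) \<sigma> (map (\<lambda>(j, x). \<xi> (idx x) (join_idx xs) \<sigma> j x) (zip [1..<Suc (length xs)] xs))"
  unfolding plonka_ops_def Let_def by (rule refl)

lemma pl_idx_le_join_idx:
  assumes "x \<in> set xs" and "set xs \<subseteq> carrier"
  shows "sl_le join (idx x) (join_idx xs)"
proof -
  from assms(1) have "xs \<noteq> []" by auto
  from pl_join_idx_lub[OF this assms(2)] assms(1) show ?thesis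
    unfolding sl_lub_def sl_upper_bound_def by blast
qed

lemma join_idx_in_I:
  assumes "\<sigma> \<in> S" "length xs = ar \<sigma>" "set xs \<subseteq> carrier"
  shows "join_idx xs \<in> I"
proof (cases "xs = []")
  case True
  with assms bt_in_I show ?thesis by (simp add: pl_join_idx_def)
next
  case False
  from pl_join_idx_lub[OF this assms(3)] show ?thesis
    unfolding sl_lub_def sl_upper_bound_def by blast
qed

lemma plonka_ops_in_join_summand:
  assumes "\<sigma> \<in> S" "length xs = ar \<sigma>" "set xs \<subseteq> carrier"
  shows "Pl \<sigma> xs \<in> A (join_idx xs)"
proof -
  define q where "q = join_idx xs"
  have "q \<in> I" unfolding q_def using join_idx_in_I[OF assms] .
  have "\<xi> (idx x) q \<sigma> j x \<in> A q" if "(j, x) \<in> set (zip [1..<Suc (length xs)] xs)" for j x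
  proof -
    from zip_upt_memD[OF that] assms(2) have x: "x \<in> set xs" and "j \<le> ar \<sigma>" by auto
    with assms(3) have "idx x \<in> I" "x \<in> A (idx x)" using pl_idx_in_carrier by blast+
    with xi_in_summand pl_idx_le_join_idx[OF x assms(3)] \<open>q \<in> I\<close> assms(1) \<open>j \<le> ar \<sigma>\<close>
    show ?thesis unfolding q_def by blast
  qed
  then have "set (map (\<lambda>(j, x). \<xi> (idx x) q \<sigma> j x) (zip [1..<Suc (length xs)] xs)) \<subseteq> A q"
    by auto
  with summand_closed \<open>q \<in> I\<close> assms(1,2) show ?thesis
    unfolding plonka_ops_eq q_def[symmetric] by simp
qed

lemma join_idx_eq_if_plonka_ops_in_summand:
  assumes "\<sigma> \<in> S" "length xs = ar \<sigma>" "set xs \<subseteq> carrier" "q \<in> I" "Pl \<sigma> xs \<in> A q"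
  shows "join_idx xs = q"
  using summands_disjoint[OF join_idx_in_I[OF assms(1-3)] assms(4)]
    plonka_ops_in_join_summand[OF assms(1-3)] assms(5) by blast

lemma plonka_sum_is_algebra: "is_algebra S ar carrier Pl"
  unfolding is_algebra_def
proof (intro ballI allI impI)
  fix \<sigma> xs assume "\<sigma> \<in> S" "length xs = ar \<sigma> \<and> set xs \<subseteq> carrier"
  then have "join_idx xs \<in> I" "Pl \<sigma> xs \<in> A (join_idx xs)"
    using join_idx_in_I plonka_ops_in_join_summand by blast+
  then show "Pl \<sigma> xs \<in> carrier" unfolding plonka_carrier_def by blast
qed

lemma plonka_ops_summand:
  assumes "p \<in> I" "\<sigma> \<in> S" "length xs = ar \<sigma>" "xs \<noteq> []" "set xs \<subseteq> A p"
  shows "Pl \<sigma> xs = F p \<sigma> xs"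
proof -
  have idx: "idx x = p" if "x \<in> set xs" for x
    using that assms pl_idx_eq by blast
  then have "idx ` set xs = {p}" using assms(4) by (cases xs) auto
  moreover have "set xs \<subseteq> carrier" using assms(1,5) unfolding plonka_carrier_def by blast
  ultimately have "join_idx xs = p"
    using pl_join_idx_lub[OF assms(4)] sl_lub_singleton[OF assms(1)] sl_lub_unique by metis
  moreover have "map (\<lambda>(j, x). \<xi> (idx x) p \<sigma> j x) (zip [1..<Suc (length xs)] xs) = xs"
  proof -
    have "map (\<lambda>(j, x). \<xi> (idx x) p \<sigma> j x) (zip [1..<Suc (length xs)] xs)
        = map snd (zip [1..<Suc (length xs)] xs)"
    proof (rule map_cong[OF refl], clarify)
      fix j x assume "(j, x) \<in> set (zip [1..<Suc (length xs)] xs)"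
      from zip_upt_memD[OF this] show "\<xi> (idx x) p \<sigma> j x = snd (j, x)"
        using idx xi_refl assms by auto
    qed
    then show ?thesis by (simp add: map_snd_zip del: upt_Suc)
  qed
  ultimately show ?thesis by (simp add: plonka_ops_eq)
qed

lemma generated_summand_subset:
  assumes "p \<in> I" and "X \<subseteq> A p"
  shows "generated S ar (F p) X \<subseteq> generated S ar Pl (X \<union> (\<lambda>\<sigma>. F p \<sigma> []) ` {\<sigma>\<in>S. ar \<sigma> = 0})"
    (is "_ \<subseteq> generated S ar Pl ?X")
proof
  fix t assume "t \<in> generated S ar (F p) X"
  then show "t \<in> generated S ar Pl ?X"
  proof induction
    case (gen_base x)
    then show ?case by (blast intro: generated.gen_base)
  next
    case (gen_op \<sigma> xs)
    show ?case
    proof (cases "xs = []")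
      case True
      with gen_op.hyps(1,2) show ?thesis by (auto intro: generated.gen_base)
    next
      case False
      have "set xs \<subseteq> A p"
        using gen_op.IH generated_subset_carrier[OF summand_is_algebra[OF assms(1)] assms(2)] by blast
      with plonka_ops_summand assms(1) gen_op.hyps(1,2) False have "F p \<sigma> xs = Pl \<sigma> xs" by simp
      moreover have "Pl \<sigma> xs \<in> generated S ar Pl ?X"
        using gen_op.hyps gen_op.IH by (blast intro: generated.gen_op)
      ultimately show ?thesis by simp
    qed
  qed
qed

lemma locally_finite_summand:
  assumes "finite S" and "locally_finite S ar carrier Pl" and "p \<in> I"
  shows "locally_finite S ar (A p) (F p)"
  unfolding locally_finite_def
proof (intro allI impI)
  fix X assume X: "finite X \<and> X \<subseteq> A p"
  let ?K = "(\<lambda>\<sigma>. F p \<sigma> []) ` {\<sigma>\<in>S. ar \<sigma> = 0}"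
  have "?K \<subseteq> A p" using summand_closed[OF assms(3)] by auto
  moreover have "finite ?K" using assms(1) by simp
  ultimately have "X \<union> ?K \<subseteq> carrier" "finite (X \<union> ?K)"
    using assms(3) X unfolding plonka_carrier_def by blast+
  with assms(2) have "finite (generated S ar Pl (X \<union> ?K))"
    unfolding locally_finite_def by blast
  then show "finite (generated S ar (F p) X)"
    using generated_summand_subset[OF assms(3)] X finite_subset by blast
qed

lemma generated_plonka_subset_carrier: "X \<subseteq> carrier \<Longrightarrow> generated S ar Pl X \<subseteq> carrier"
  by (rule generated_subset_carrier[OF plonka_sum_is_algebra])

lemma finite_generated_indices:
  assumes "finite X" and "X \<subseteq> carrier"
  shows "finite (idx ` generated S ar Pl X)"
proof -
  define P0 where "P0 = idx ` X \<union> {bt | \<sigma>. \<sigma> \<in> S \<and> ar \<sigma> = 0}"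
  have "P0 \<subseteq> I" using assms(2) pl_idx_in_carrier bt_in_I by (auto simp: P0_def)
  have "finite P0" using assms(1) finite_subset[of "{bt | \<sigma>. \<sigma> \<in> S \<and> ar \<sigma> = 0}" "{bt}"]
    by (auto simp: P0_def)
  have "idx t \<in> sl_join_closure I join P0" if "t \<in> generated S ar Pl X" for t
    using that
  proof induction
    case (gen_base x)
    then show ?case using subset_sl_join_closure[OF \<open>P0 \<subseteq> I\<close>] by (auto simp: P0_def)
  next
    case (gen_op \<sigma> xs)
    have "set xs \<subseteq> carrier" using gen_op.IH generated_plonka_subset_carrier[OF assms(2)] by blast
    with gen_op.hyps(1,2) have "idx (Pl \<sigma> xs) = join_idx xs"
      using join_idx_in_I plonka_ops_in_join_summand pl_idx_eq by blast
    show ?case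
    proof (cases "xs = []")
      case True
      with gen_op.hyps(1,2) have "join_idx xs \<in> P0" by (auto simp: P0_def pl_join_idx_def)
      then show ?thesis using subset_sl_join_closure[OF \<open>P0 \<subseteq> I\<close>] \<open>idx (Pl \<sigma> xs) = join_idx xs\<close> by auto
    next
      case False
      have "idx ` set xs \<subseteq> sl_join_closure I join P0" using gen_op.IH by blast
      from sl_lub_in_sl_join_closure[OF \<open>P0 \<subseteq> I\<close> this _ pl_join_idx_lub[OF False \<open>set xs \<subseteq> carrier\<close>]]
      show ?thesis using False \<open>idx (Pl \<sigma> xs) = join_idx xs\<close> by simp
    qed
  qed
  then show ?thesis
    using finite_subset[OF _ finite_sl_join_closure[OF \<open>finite P0\<close>]] by blast
qed

definition summand_generators :: "'a set \<Rightarrow> 'i \<Rightarrow> 'a set" where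
  "summand_generators X q = X \<inter> A q \<union>
     (\<Union>p\<in>{p\<in>idx ` generated S ar Pl X. sl_le join p q \<and> p \<noteq> q}.
        \<Union>\<sigma>\<in>S. \<Union>j\<in>{..ar \<sigma>}. \<xi> p q \<sigma> j ` (generated S ar Pl X \<inter> A p))"

lemma summand_generators_subset:
  assumes "X \<subseteq> carrier" and "q \<in> I"
  shows "summand_generators X q \<subseteq> A q"
proof -
  have "idx ` generated S ar Pl X \<subseteq> I"
    using generated_plonka_subset_carrier[OF assms(1)] pl_idx_in_carrier by blast
  with assms(2) show ?thesis
    unfolding summand_generators_def by (auto intro: xi_in_summand)
qed

lemma xi_in_summand_generators:
  assumes "x \<in> generated S ar Pl X" "p \<in> I" "x \<in> A p" "sl_le join p q" "p \<noteq> q"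
    and "\<sigma> \<in> S" "j \<le> ar \<sigma>"
  shows "\<xi> p q \<sigma> j x \<in> summand_generators X q"
proof -
  from assms(1-3) have "p \<in> idx ` generated S ar Pl X" using pl_idx_eq by blast
  with assms show ?thesis unfolding summand_generators_def by blast
qed

lemma finite_summand_generators:
  assumes "finite S" and "finite X" and "X \<subseteq> carrier"
    and "\<And>p. p \<in> idx ` generated S ar Pl X \<Longrightarrow> sl_le join p q \<Longrightarrow> p \<noteq> q
      \<Longrightarrow> finite (generated S ar Pl X \<inter> A p)"
  shows "finite (summand_generators X q)"
  unfolding summand_generators_def
  using assms finite_generated_indices[OF assms(2,3)] by (intro finite_UnI finite_UN_I) auto

lemma generated_inter_summand_subset:
  assumes "X \<subseteq> carrier" and "q \<in> I"
  shows "generated S ar Pl X \<inter> A q \<subseteq> generated S ar (F q) (summand_generators X q)"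
proof -
  let ?T = "generated S ar Pl X" and ?Y = "summand_generators X q"
  have "t \<in> A q \<longrightarrow> t \<in> generated S ar (F q) ?Y" if "t \<in> ?T" for t
    using that
  proof induction
    case (gen_base x)
    then show ?case unfolding summand_generators_def by (blast intro: generated.gen_base)
  next
    case (gen_op \<sigma> xs)
    have "set xs \<subseteq> ?T" using gen_op.IH by blast
    then have "set xs \<subseteq> carrier" using generated_plonka_subset_carrier[OF assms(1)] by blast
    show ?case
    proof
      assume "Pl \<sigma> xs \<in> A q"
      with gen_op.hyps(1,2) \<open>set xs \<subseteq> carrier\<close> assms(2) have "join_idx xs = q"
        by (rule join_idx_eq_if_plonka_ops_in_summand)
      have "\<xi> (idx x) q \<sigma> j x \<in> generated S ar (F q) ?Y"
        if "(j, x) \<in> set (zip [1..<Suc (length xs)] xs)" for j x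
      proof -
        from zip_upt_memD[OF that] gen_op.hyps(2) have x: "x \<in> set xs" and "j \<le> ar \<sigma>" by auto
        with \<open>set xs \<subseteq> carrier\<close> have "idx x \<in> I" "x \<in> A (idx x)" using pl_idx_in_carrier by blast+
        have "sl_le join (idx x) q"
          using pl_idx_le_join_idx[OF x \<open>set xs \<subseteq> carrier\<close>] \<open>join_idx xs = q\<close> by simp
        show ?thesis
        proof (cases "idx x = q")
          case True
          with xi_refl \<open>x \<in> A (idx x)\<close> gen_op.hyps(1) gen_op.IH x \<open>j \<le> ar \<sigma>\<close> assms(2)
          show ?thesis by auto
        next
          case False
          with xi_in_summand_generators x \<open>set xs \<subseteq> ?T\<close> \<open>idx x \<in> I\<close> \<open>x \<in> A (idx x)\<close>
            \<open>sl_le join (idx x) q\<close> gen_op.hyps(1) \<open>j \<le> ar \<sigma>\<close>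
          have "\<xi> (idx x) q \<sigma> j x \<in> ?Y" by blast
          then show ?thesis by (rule generated.gen_base)
        qed
      qed
      with gen_op.hyps(1,2) show "Pl \<sigma> xs \<in> generated S ar (F q) ?Y"
        unfolding plonka_ops_eq \<open>join_idx xs = q\<close> by (auto intro!: generated.gen_op)
    qed
  qed
  then show ?thesis by blast
qed

lemma locally_finite_plonka_sum:
  assumes "finite S" and "\<forall>p\<in>I. locally_finite S ar (A p) (F p)"
  shows "locally_finite S ar carrier Pl"
  unfolding locally_finite_def
proof (intro allI impI)
  fix X assume X: "finite X \<and> X \<subseteq> carrier"
  let ?T = "generated S ar Pl X"
  have "finite (idx ` ?T)" using finite_generated_indices X by blast
  have "?T \<subseteq> carrier" using generated_plonka_subset_carrier X by blast
  then have "idx ` ?T \<subseteq> I" using pl_idx_in_carrier by blast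
  have finite_parts: "finite (?T \<inter> A q)" if "q \<in> I" for q
  proof (rule finite_strict_below_induct[OF \<open>finite (idx ` ?T)\<close> \<open>idx ` ?T \<subseteq> I\<close> that])
    fix q assume "q \<in> I"
      and IH: "\<And>p. p \<in> idx ` ?T \<Longrightarrow> sl_le join p q \<Longrightarrow> p \<noteq> q \<Longrightarrow> finite (?T \<inter> A p)"
    have "finite (summand_generators X q)"
      using finite_summand_generators[OF assms(1)] X IH by blast
    moreover have "summand_generators X q \<subseteq> A q"
      using summand_generators_subset X \<open>q \<in> I\<close> by blast
    moreover have "locally_finite S ar (A q) (F q)" using assms(2) \<open>q \<in> I\<close> by blast
    ultimately have "finite (generated S ar (F q) (summand_generators X q))"
      unfolding locally_finite_def by simp
    with generated_inter_summand_subset X \<open>q \<in> I\<close> show "finite (?T \<inter> A q)"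
      by (meson finite_subset)
  qed
  have "?T \<subseteq> (\<Union>q\<in>idx ` ?T. ?T \<inter> A q)"
    using \<open>?T \<subseteq> carrier\<close> pl_idx_in_carrier by blast
  moreover have "finite (\<Union>q\<in>idx ` ?T. ?T \<inter> A q)"
    using \<open>finite (idx ` ?T)\<close> \<open>idx ` ?T \<subseteq> I\<close> finite_parts by blast
  ultimately show "finite ?T" by (rule finite_subset)
qed

end

theorem theorem4p7:
  fixes S :: "'s set" and ar :: "'s \<Rightarrow> nat"
    and I :: "'i set" and join :: "'i \<Rightarrow> 'i \<Rightarrow> 'i" and bt :: 'i
    and A :: "'i \<Rightarrow> 'a set" and F :: "'i \<Rightarrow> 's \<Rightarrow> 'a list \<Rightarrow> 'a"
    and \<xi> :: "'i \<Rightarrow> 'i \<Rightarrow> 's \<Rightarrow> nat \<Rightarrow> 'a \<Rightarrow> 'a"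
  assumes "finite S"
    and "sl_directed_system S ar I join bt A F \<xi>"
  shows "locally_finite S ar (plonka_carrier I A) (plonka_ops I join bt A F \<xi>)
         \<longleftrightarrow> (\<forall>p\<in>I. locally_finite S ar (A p) (F p))"
proof -
  interpret plonka_system S ar I join bt A F \<xi>
    using assms(2) by (rule sl_directed_system_imp_plonka_system)
  show ?thesis
    using locally_finite_summand[OF assms(1)] locally_finite_plonka_sum[OF assms(1)] by blast
qed

end
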